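(* Let $g=\frac{\sqrt5-1}2$, $g\le\alpha\le\beta\le1$, $x\in[\alpha-1,\alpha)$, $z\in[\beta-1,\beta)$. (1) If $x=z$ or $(x+1)(1-z)=1$ or $(1-x)(z+1)=1$, then $T_\beta(z)-T_\alpha(x)\in\{0,1\}$. (2) If $x+z=0$ or $(x+1)(z+1)=1$, then $T_\alpha(x)+T_\beta(z)\in\{0,1\}$. (3) If $z-x=1$, then $(x+1)(T_\beta(z)+1)=1$. (4) If $x+z=1$, then $(T_\alpha(x)+1)(1-z)=1$ if $x>\frac1{\alpha+1}$; $(1-x)(T_\beta(z)+1)=1$ if $z>\frac1{\beta+1}$; and $(T_\alpha(x)+1)(T_\beta(z)+1)=1$ otherwise.
   Context: For $\alpha\in[\tfrac12,1]$, $T_\alpha:[\alpha-1,\alpha)\to[\alpha-1,\alpha)$ is $T_\alpha(x)=\frac1x-\lfloor\frac1x+1-\alpha\rfloor$ for $x\ne0$, $T_\alpha(0)=0$. *)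

theory Defs
  imports Complex_Main
begin

definition Talpha :: "real \<Rightarrow> real \<Rightarrow> real" where
  "Talpha a x = (if x = 0 then 0 else 1 / x - of_int \<lfloor>1 / x + 1 - a\<rfloor>)"

end

theory Submission
  imports Defs
begin

text \<open>Since \<open>1/x - T\<^sub>\<alpha> x\<close> is always an integer, each of the Moebius relations between
  \<open>x\<close> and \<open>z\<close> in (1) and (2) makes the difference, resp. the sum, of the images an integer,
  and the ranges \<open>[\<alpha>-1,\<alpha>)\<close> and \<open>[\<beta>-1,\<beta>)\<close> leave only 0 and 1. In (3) and (4) the hypotheses
  place the points in the first or second branch of the map, where \<open>T\<^sub>\<alpha> x = 1/x - 1\<close>
  resp. \<open>1/x - 2\<close>; the bound \<open>g \<le> \<alpha>\<close>, equivalently \<open>\<alpha> (\<alpha> + 1) \<ge> 1\<close>, is what excludes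
  the next branch in each case.\<close>

definition inv_golden_ratio :: real where
  "inv_golden_ratio = (sqrt 5 - 1) / 2"

lemma inv_golden_ratio_mult_succ: "inv_golden_ratio * (inv_golden_ratio + 1) = 1"
proof -
  have "sqrt 5 * sqrt 5 = (5::real)" by simp
  then show ?thesis unfolding inv_golden_ratio_def by (simp add: field_simps)
qed

lemma inv_golden_ratio_gt_half: "1 / 2 < inv_golden_ratio"
proof -
  have "2 < sqrt (5::real)" by (simp add: real_less_rsqrt)
  then show ?thesis unfolding inv_golden_ratio_def by simp
qed

lemma one_le_mult_succ_if_inv_golden_ratio_le:
  fixes a :: real
  assumes "inv_golden_ratio \<le> a"
  shows "1 \<le> a * (a + 1)"
proof -
  have "inv_golden_ratio * (inv_golden_ratio + 1) \<le> a * (a + 1)"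
    using assms inv_golden_ratio_gt_half by (intro mult_mono) auto
  then show ?thesis by (simp add: inv_golden_ratio_mult_succ)
qed

lemma inverse_plus_two_less_if_inv_golden_ratio_le:
  fixes a b w :: real
  assumes "inv_golden_ratio \<le> a" "a \<le> b" "1 - b < w" "b / (b + 1) \<le> w"
  shows "1 / (a + 2) < w"
proof -
  let ?g = inv_golden_ratio
  have g_pos: "0 < ?g" using inv_golden_ratio_gt_half by linarith
  \<comment> \<open>\<open>1 - g = 1 / (g + 2)\<close> is the value of the bound at \<open>a = g\<close>\<close>
  have "1 - ?g < w"
  proof (cases "b = ?g")
    case True
    then show ?thesis using assms(3) by simp
  next
    case False
    then have "?g * ?g < ?g * b" using assms(1,2) g_pos by simp
    then have "1 < ?g * (b + 1)" using inv_golden_ratio_mult_succ by (simp add: algebra_simps)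
    then have "1 - ?g < b / (b + 1)" using assms(1,2) g_pos by (simp add: field_simps)
    then show ?thesis using assms(4) by linarith
  qed
  moreover have "1 - ?g = ?g * ?g" using inv_golden_ratio_mult_succ by (simp add: algebra_simps)
  ultimately have "0 < w" using g_pos by (smt (verit) zero_less_mult_iff)
  have "1 < w * (?g + 2)"
    using \<open>1 - ?g < w\<close> inv_golden_ratio_mult_succ g_pos mult_strict_right_mono[of "1 - ?g" w "?g + 2"]
    by (simp add: algebra_simps)
  also have "\<dots> \<le> w * (a + 2)" using assms(1) \<open>0 < w\<close> by simp
  finally show ?thesis using assms(1) g_pos by (simp add: field_simps)
qed

lemma Ints_mem_01_if_bounds:
  fixes d :: real
  assumes "d \<in> \<int>" "-1 < d" "d < 2"
  shows "d \<in> {0, 1}"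
proof -
  obtain k where k: "d = of_int k" using assms(1) by (auto elim: Ints_cases)
  then have "k = 0 \<or> k = 1" using assms(2,3) by auto
  then show ?thesis using k by auto
qed

lemma inverse_minus_Talpha_in_Ints: "1 / x - Talpha a x \<in> \<int>"
  by (simp add: Talpha_def)

lemma Talpha_bounds:
  assumes "0 < a" "a \<le> 1"
  shows "a - 1 \<le> Talpha a x" "Talpha a x < a"
proof -
  have "a - 1 \<le> Talpha a x \<and> Talpha a x < a"
  proof (cases "x = 0")
    case True
    then show ?thesis using assms by (simp add: Talpha_def)
  next
    case False
    then have "Talpha a x = 1 / x - of_int \<lfloor>1 / x + 1 - a\<rfloor>" by (simp add: Talpha_def)
    moreover have "of_int \<lfloor>1 / x + 1 - a\<rfloor> \<le> 1 / x + 1 - a"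
      "1 / x + 1 - a < of_int \<lfloor>1 / x + 1 - a\<rfloor> + 1" by linarith+
    ultimately show ?thesis by linarith
  qed
  then show "a - 1 \<le> Talpha a x" "Talpha a x < a" by simp_all
qed

lemma Talpha_eqI:
  assumes "x \<noteq> 0" "a - 1 \<le> 1 / x - of_int n" "1 / x - of_int n < a"
  shows "Talpha a x = 1 / x - of_int n"
proof -
  have "\<lfloor>1 / x + 1 - a\<rfloor> = n" by (rule floor_unique) (use assms in auto)
  then show ?thesis using assms(1) by (simp add: Talpha_def)
qed

lemma Talpha_eq_inverse_minus_one:
  assumes "0 < a" "a \<le> 1" "x \<le> 1" "1 / (a + 1) < x"
  shows "Talpha a x = 1 / x - 1"
proof -
  have "0 < x" using assms(1,4) by (smt (verit) divide_pos_pos)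
  then have "1 \<le> 1 / x" "1 / x < a + 1" using assms by (simp_all add: field_simps)
  then have "a - 1 \<le> 1 / x - of_int 1" "1 / x - of_int 1 < a" using assms(2) by simp_all
  with \<open>0 < x\<close> show ?thesis using Talpha_eqI[of x a 1] by simp
qed

lemma Talpha_eq_inverse_minus_two:
  assumes "0 < a" "x \<le> 1 / (a + 1)" "1 / (a + 2) < x"
  shows "Talpha a x = 1 / x - 2"
proof -
  have "0 < x" using assms(1,3) by (smt (verit) divide_pos_pos)
  then have "a + 1 \<le> 1 / x" "1 / x < a + 2" using assms by (simp_all add: field_simps)
  then show ?thesis using Talpha_eqI[of x a 2] \<open>0 < x\<close> by simp
qed

lemma inverse_diff_in_Ints:
  fixes x z :: real
  assumes "x = z \<or> (x + 1) * (1 - z) = 1 \<or> (1 - x) * (z + 1) = 1"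
  shows "1 / z - 1 / x \<in> \<int>"
proof -
  have "x = 0 \<longleftrightarrow> z = 0" using assms by auto
  then have "1 / z - 1 / x \<in> {0, 1, -1}" using assms by (auto simp: field_simps)
  then show ?thesis by auto
qed

lemma inverse_add_in_Ints:
  fixes x z :: real
  assumes "x + z = 0 \<or> (x + 1) * (z + 1) = 1"
  shows "1 / x + 1 / z \<in> \<int>"
proof -
  have "x = 0 \<longleftrightarrow> z = 0" using assms by auto
  then have "1 / x + 1 / z \<in> {0, -1}" using assms by (auto simp: field_simps)
  then show ?thesis by auto
qed

lemma Talpha_diff_mem_01:
  assumes "0 < a" "a \<le> b" "b \<le> 1" "1 / z - 1 / x \<in> \<int>"
  shows "Talpha b z - Talpha a x \<in> {0, 1}"
proof (rule Ints_mem_01_if_bounds)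
  have "Talpha b z - Talpha a x = (1 / z - 1 / x) - (1 / z - Talpha b z) + (1 / x - Talpha a x)"
    by simp
  then show "Talpha b z - Talpha a x \<in> \<int>"
    using assms(4) inverse_minus_Talpha_in_Ints by (metis Ints_add Ints_diff)
  show "-1 < Talpha b z - Talpha a x" "Talpha b z - Talpha a x < 2"
    using assms(1-3) Talpha_bounds[of a] Talpha_bounds[of b] by (smt (verit))+
qed

lemma Talpha_add_mem_01:
  assumes "1 < a + b" "a \<le> 1" "b \<le> 1" "1 / x + 1 / z \<in> \<int>"
  shows "Talpha a x + Talpha b z \<in> {0, 1}"
proof (rule Ints_mem_01_if_bounds)
  have "Talpha a x + Talpha b z = (1 / x + 1 / z) - (1 / x - Talpha a x) - (1 / z - Talpha b z)"
    by simp
  then show "Talpha a x + Talpha b z \<in> \<int>"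
    using assms(4) inverse_minus_Talpha_in_Ints by (metis Ints_diff)
  have "0 < a" "0 < b" using assms(1-3) by linarith+
  then show "-1 < Talpha a x + Talpha b z" "Talpha a x + Talpha b z < 2"
    using assms(1-3) Talpha_bounds[of a] Talpha_bounds[of b] by (smt (verit))+
qed

lemma succ_mult_Talpha_succ_plus_one:
  assumes "inv_golden_ratio \<le> a" "a \<le> b" "b \<le> 1" "a - 1 \<le> x" "x + 1 < b"
  shows "(x + 1) * (Talpha b (x + 1) + 1) = 1"
proof -
  have "0 < a" using assms(1) inv_golden_ratio_gt_half by linarith
  have "1 \<le> a * (a + 1)" using assms(1) by (rule one_le_mult_succ_if_inv_golden_ratio_le)
  also have "\<dots> < a * (b + 1)" using \<open>0 < a\<close> assms(4,5) by simp
  also have "\<dots> \<le> (x + 1) * (b + 1)" using assms(2,4) \<open>0 < a\<close> by (intro mult_right_mono) auto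
  finally have "1 / (b + 1) < x + 1" using \<open>0 < a\<close> assms(2) by (simp add: field_simps)
  then have "Talpha b (x + 1) = 1 / (x + 1) - 1"
    using \<open>0 < a\<close> assms(2,3,5) by (intro Talpha_eq_inverse_minus_one) auto
  moreover have "0 < x + 1" using \<open>0 < a\<close> assms(4) by simp
  ultimately show ?thesis by simp
qed

lemma Talpha_plus_one_mult_eq_one:
  assumes "inv_golden_ratio \<le> a" "a \<le> b" "b \<le> 1" "x < a" "z < b" "x + z = 1"
    and "x \<le> 1 / (a + 1)" "z \<le> 1 / (b + 1)"
  shows "(Talpha a x + 1) * (Talpha b z + 1) = 1"
proof -
  have "0 < a" using assms(1) inv_golden_ratio_gt_half by linarith
  have "0 < x" "0 < z" using assms(2-6) by linarith+
  have "x * (b + 1) + z * (b + 1) = b + 1" "x * (a + 1) + z * (a + 1) = a + 1"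
    by (simp_all only: assms(6) mult_1 flip: distrib_right)
  moreover have "z * (b + 1) \<le> 1" "x * (a + 1) \<le> 1"
    using assms(2,7,8) \<open>0 < a\<close> by (simp_all add: field_simps)
  ultimately have "b / (b + 1) \<le> x" "a / (a + 1) \<le> z"
    using assms(2) \<open>0 < a\<close> by (simp_all add: field_simps)
  then have "1 / (a + 2) < x" "1 / (a + 2) < z"
    using assms(1-2,4-6) inverse_plus_two_less_if_inv_golden_ratio_le[of a b x]
      inverse_plus_two_less_if_inv_golden_ratio_le[of a a z] by auto
  moreover have "1 / (b + 2) \<le> 1 / (a + 2)" using assms(2) \<open>0 < a\<close> by (simp add: frac_le)
  ultimately have "Talpha a x = 1 / x - 2" "Talpha b z = 1 / z - 2"
    using assms(2,7,8) \<open>0 < a\<close> by (auto intro: Talpha_eq_inverse_minus_two)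
  then have "Talpha a x + 1 = z / x" "Talpha b z + 1 = x / z"
    using \<open>0 < x\<close> \<open>0 < z\<close> assms(6) by (simp_all add: field_simps)
  then show ?thesis using \<open>0 < x\<close> \<open>0 < z\<close> by simp
qed

theorem lemma4p2:
  fixes a b x z :: real
  defines "g \<equiv> (sqrt 5 - 1) / 2"
  assumes hab: "g \<le> a" "a \<le> b" "b \<le> 1"
    and hx: "a - 1 \<le> x" "x < a"
    and hz: "b - 1 \<le> z" "z < b"
  shows
    "((x = z \<or> (x + 1) * (1 - z) = 1 \<or> (1 - x) * (z + 1) = 1)
       \<longrightarrow> Talpha b z - Talpha a x \<in> {0, 1})
    \<and> ((x + z = 0 \<or> (x + 1) * (z + 1) = 1)
       \<longrightarrow> Talpha a x + Talpha b z \<in> {0, 1})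
    \<and> (z - x = 1 \<longrightarrow> (x + 1) * (Talpha b z + 1) = 1)
    \<and> (x + z = 1 \<longrightarrow> x > 1 / (a + 1)
       \<longrightarrow> (Talpha a x + 1) * (1 - z) = 1)
    \<and> (x + z = 1 \<longrightarrow> z > 1 / (b + 1)
       \<longrightarrow> (1 - x) * (Talpha b z + 1) = 1)
    \<and> (x + z = 1 \<longrightarrow> x \<le> 1 / (a + 1) \<longrightarrow> z \<le> 1 / (b + 1)
       \<longrightarrow> (Talpha a x + 1) * (Talpha b z + 1) = 1)"
proof (intro conjI impI)
  have golden: "inv_golden_ratio \<le> a" using hab(1) by (simp add: g_def inv_golden_ratio_def)
  then have "1 / 2 < a" using inv_golden_ratio_gt_half by linarith
  then have "0 < 1 / (a + 1)" "0 < 1 / (b + 1)" using hab(2) by simp_all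
  show "Talpha b z - Talpha a x \<in> {0, 1}" if "x = z \<or> (x + 1) * (1 - z) = 1 \<or> (1 - x) * (z + 1) = 1"
    using that \<open>1 / 2 < a\<close> hab by (intro Talpha_diff_mem_01 inverse_diff_in_Ints) auto
  show "Talpha a x + Talpha b z \<in> {0, 1}" if "x + z = 0 \<or> (x + 1) * (z + 1) = 1"
    using that \<open>1 / 2 < a\<close> hab by (intro Talpha_add_mem_01 inverse_add_in_Ints) auto
  show "(x + 1) * (Talpha b z + 1) = 1" if "z - x = 1"
  proof -
    have "z = x + 1" using that by simp
    then show ?thesis using succ_mult_Talpha_succ_plus_one[OF golden hab(2,3) hx(1)] hz(2) by simp
  qed
  show "(Talpha a x + 1) * (1 - z) = 1" if "x + z = 1" "x > 1 / (a + 1)"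
  proof -
    have "1 - z = x" "0 < x" using that \<open>0 < 1 / (a + 1)\<close> by linarith+
    then show ?thesis using Talpha_eq_inverse_minus_one[of a x] that(2) \<open>1 / 2 < a\<close> hab hx by simp
  qed
  show "(1 - x) * (Talpha b z + 1) = 1" if "x + z = 1" "z > 1 / (b + 1)"
  proof -
    have "1 - x = z" "0 < z" using that \<open>0 < 1 / (b + 1)\<close> by linarith+
    then show ?thesis using Talpha_eq_inverse_minus_one[of b z] that(2) \<open>1 / 2 < a\<close> hab hz by simp
  qed
  show "(Talpha a x + 1) * (Talpha b z + 1) = 1"
    if "x + z = 1" "x \<le> 1 / (a + 1)" "z \<le> 1 / (b + 1)"
    using Talpha_plus_one_mult_eq_one[OF golden hab(2,3) hx(2) hz(2)] that by simp
qed

end
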